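(* Let $0<A<1$, $\lambda_0=A-1$, $L>0$, $\sigma=2\pi/L$ and $c_0\ge2\sqrt{-\lambda_0}$. If $\mu_{max}>0$ is small enough, there exists $\kappa>0$ such that for all $(n,j)\in\mathbb{Z}\times\mathbb{N}$ and $0\le\mu<\mu_{max}$, $$|\operatorname{Re}a^\pm_{n,j,\mu}|\ge2\kappa,\quad |\operatorname{Re}b^-_{n,j,\mu}|\ge2\kappa,\quad\text{and}\quad |\operatorname{Re}b^+_{n,j,\mu}|\ge2\kappa\ \text{ whenever }\operatorname{Re}b^+_{n,j,\mu}<0.$$ Also, there exist $C_\kappa,\overline N,\overline J\ge0$ such that if $|n|\ge\overline N$ or $j\ge\overline J$, then for all $0\le\mu<\mu_{max}$, $$0<\frac{1}{|\operatorname{Re}a^\pm_{n,j,\mu}|-\kappa},\ \frac{1}{|\operatorname{Re}b^\pm_{n,j,\mu}|-\kappa}\le\frac{C_\kappa}{\sqrt{1+\mu n^2+j+|n|}}.$$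
   Context: $\lambda_j=-1+(2j+1)A$. With $\delta_{0j}$ the Kronecker symbol, $a^\pm_{n,j,\mu}=\frac12\Big(-2in\sigma-c_0\pm\sqrt{4\mu n^2\sigma^2+c_0^2+4in\sigma c_0+4[(1-\delta_{0j})\lambda_j-\lambda_0]}\Big)$ and $b^\pm_{n,j,\mu}=\frac12\Big(-2in\sigma-c_0\pm\sqrt{4\mu n^2\sigma^2+c_0^2+4in\sigma c_0+4\lambda_j}\Big)$, where for $z=re^{i\vartheta}$ with $r\ge0$, $\vartheta\in(-\pi,\pi]$, $\sqrt z:=\sqrt r e^{i\vartheta/2}$. *)

theory Defs
  imports "HOL-Analysis.Analysis"
begin

definition psqrt :: "complex \<Rightarrow> complex" where
  "psqrt z = complex_of_real (sqrt (cmod z)) * exp (\<i> * complex_of_real (Arg z / 2))"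

definition lam :: "real \<Rightarrow> nat \<Rightarrow> real" where
  "lam A j = -1 + (2 * real j + 1) * A"

definition kdelta :: "nat \<Rightarrow> real" where
  "kdelta j = (if j = 0 then 1 else 0)"

text \<open>sigma = 2 pi / L. The sign s \<in> {1,-1} selects the superscript +/-.\<close>
definition acoef :: "real \<Rightarrow> real \<Rightarrow> real \<Rightarrow> real \<Rightarrow> int \<Rightarrow> nat \<Rightarrow> real \<Rightarrow> complex" where
  "acoef A L c0 s n j \<mu> = (let \<sigma> = 2 * pi / L in
     (1/2) * (- 2 * \<i> * of_int n * \<sigma> - c0 + s * psqrt (4 * \<mu> * of_int n ^ 2 * \<sigma> ^ 2 + c0 ^ 2
        + 4 * \<i> * of_int n * \<sigma> * c0 + 4 * ((1 - kdelta j) * lam A j - lam A 0))))"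

definition bcoef :: "real \<Rightarrow> real \<Rightarrow> real \<Rightarrow> real \<Rightarrow> int \<Rightarrow> nat \<Rightarrow> real \<Rightarrow> complex" where
  "bcoef A L c0 s n j \<mu> = (let \<sigma> = 2 * pi / L in
     (1/2) * (- 2 * \<i> * of_int n * \<sigma> - c0 + s * psqrt (4 * \<mu> * of_int n ^ 2 * \<sigma> ^ 2 + c0 ^ 2
        + 4 * \<i> * of_int n * \<sigma> * c0 + 4 * lam A j)))"

end

theory Submission
  imports Defs
begin

(* With t = n sigma, every coefficient is (-c0 - 2 i t + s sqrt z)/2 with s = +-1, so its real
   part is (s rho - c0)/2 where rho = Re (sqrt z) = sqrt ((|z| + Re z)/2).  For a^+- one has
   Re z >= c0^2 + 4 min (1 - A) (2A), so rho stays a fixed distance above c0; Re b^- <= -c0/2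
   trivially.  For b^+, Re b^+ < 0 means (Im z)^2 < 4 c0^2 (c0^2 - Re z), i.e.
   (1 + mu) t^2 + lambda_j < 0: only finitely many modes (n, j) qualify, and rationalising
   c0 - rho bounds it below by their minimal depth once mu is small.  Finally
   2 rho >= sqrt (Re z + |Im z|), which grows like sqrt (mu n^2 + j + |n|) and gives the decay
   estimate. *)

lemma finite_pos_lower_bound:
  fixes f :: "'a \<Rightarrow> real"
  assumes "finite S" "\<forall>x\<in>S. 0 < f x"
  shows "\<exists>e>0. \<forall>x\<in>S. e \<le> f x"
  using assms by (intro exI[of _ "Min (insert 1 (f ` S))"]) auto

lemma reciprocal_shifted_le:
  fixes x W c \<kappa> :: real
  assumes "W / 4 - c / 2 \<le> x" "4 * c \<le> W" "0 < \<kappa>" "\<kappa> \<le> c / 4"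
  shows "0 < 1 / (x - \<kappa>)" and "1 / (x - \<kappa>) \<le> 16 / W"
proof -
  have "W / 16 \<le> x - \<kappa>" and "0 < W"
    using assms by linarith+
  then show "0 < 1 / (x - \<kappa>)" and "1 / (x - \<kappa>) \<le> 16 / W"
    using divide_left_mono[of "W / 16" "x - \<kappa>" 1] by simp_all
qed

lemma psqrt_eq_csqrt: "psqrt z = csqrt z"
proof (cases "z = 0")
  case True
  then show ?thesis by (simp add: psqrt_def)
next
  case False
  have Ln_z: "Ln z = of_real (ln (cmod z)) + \<i> * of_real (Arg z)"
    using False by (simp add: complex_eq_iff Arg_eq_Im_Ln)
  have "csqrt z = exp (Ln z / 2)"
    using False by (simp add: csqrt_exp_Ln)
  also have "\<dots> = exp (of_real (ln (cmod z) / 2)) * exp (\<i> * of_real (Arg z / 2))"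
    by (simp add: Ln_z exp_add[symmetric] add_divide_distrib)
  also have "exp (of_real (ln (cmod z) / 2)) = of_real (sqrt (cmod z))"
    using False by (simp flip: exp_of_real add: powr_half_sqrt[symmetric] powr_def)
  finally show ?thesis
    by (simp add: psqrt_def)
qed

lemma sqrt_Re_le_Re_csqrt:
  assumes "0 \<le> Re z"
  shows "sqrt (Re z) \<le> Re (csqrt z)"
  using assms abs_Re_le_cmod[of z] by simp

lemma sqrt_Re_add_abs_Im_le_Re_csqrt:
  assumes "0 \<le> Re z"
  shows "sqrt (Re z + \<bar>Im z\<bar>) \<le> 2 * Re (csqrt z)"
proof -
  have "Re z + \<bar>Im z\<bar> \<le> 4 * ((cmod z + Re z) / 2)"
    using assms abs_Im_le_cmod[of z] by simp
  then have "sqrt (Re z + \<bar>Im z\<bar>) \<le> sqrt 4 * sqrt ((cmod z + Re z) / 2)"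
    by (metis real_sqrt_le_mono real_sqrt_mult)
  then show ?thesis
    by simp
qed

lemma Re_csqrt_less_iff:
  assumes "0 < c"
  shows "Re (csqrt z) < c \<longleftrightarrow> (Im z)\<^sup>2 < 4 * c\<^sup>2 * (c\<^sup>2 - Re z)"
proof -
  have "Re (csqrt z) < c \<longleftrightarrow> sqrt ((cmod z + Re z) / 2) < sqrt (c\<^sup>2)"
    using assms by simp
  also have "\<dots> \<longleftrightarrow> cmod z < 2 * c\<^sup>2 - Re z"
    by (simp only: real_sqrt_less_iff) (simp add: field_simps)
  also have "\<dots> \<longleftrightarrow> (cmod z)\<^sup>2 < (2 * c\<^sup>2 - Re z)\<^sup>2 \<and> 0 < 2 * c\<^sup>2 - Re z"
    using norm_ge_zero[of z] by (auto intro: power_strict_mono power2_less_imp_less simp del: norm_ge_zero)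
  also have "\<dots> \<longleftrightarrow> (Im z)\<^sup>2 < 4 * c\<^sup>2 * (c\<^sup>2 - Re z)"
  proof -
    have "(cmod z)\<^sup>2 < (2 * c\<^sup>2 - Re z)\<^sup>2 \<longleftrightarrow> (Im z)\<^sup>2 < 4 * c\<^sup>2 * (c\<^sup>2 - Re z)"
      unfolding cmod_power2 by (simp add: power2_eq_square algebra_simps)
    moreover have "(Im z)\<^sup>2 < 4 * c\<^sup>2 * (c\<^sup>2 - Re z) \<Longrightarrow> 0 < 2 * c\<^sup>2 - Re z"
      using assms by (smt (verit) zero_le_power2 zero_less_power mult_pos_pos mult_nonneg_nonpos)
    ultimately show ?thesis by blast
  qed
  finally show ?thesis .
qed

(* Rationalise twice: with R = Re (csqrt z) and N the numerator on the left,
   c - R = (c^2 - R^2) / (c + R)  and  2 (c^2 - R^2) = 2 c^2 - Re z - |z| = N / (2 c^2 - Re z + |z|),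
   where the last denominator is at most 2 c^2 + |Im z| because Re z >= 0. *)
lemma Re_csqrt_gap:
  assumes c: "0 < c" and Re_z: "0 \<le> Re z" and less: "Re (csqrt z) < c"
  shows "(4 * c\<^sup>2 * (c\<^sup>2 - Re z) - (Im z)\<^sup>2) / (4 * c * (2 * c\<^sup>2 + \<bar>Im z\<bar>))
    \<le> c - Re (csqrt z)"
proof -
  define N where "N = 4 * c\<^sup>2 * (c\<^sup>2 - Re z) - (Im z)\<^sup>2"
  define D where "D = 2 * c\<^sup>2 - Re z + cmod z"
  define R where "R = Re (csqrt z)"
  have N_pos: "0 < N"
    using less unfolding N_def Re_csqrt_less_iff[OF c] by simp
  have D_ge: "2 * c\<^sup>2 \<le> D" and D_le: "D \<le> 2 * c\<^sup>2 + \<bar>Im z\<bar>"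
    using abs_Re_le_cmod[of z] cmod_le[of z] Re_z by (auto simp: D_def)
  have D_pos: "0 < D"
    using D_ge c by (smt (verit) zero_less_power)
  have R_nonneg: "0 \<le> R" and R_less: "R < c"
    using Re_csqrt[of z] less by (simp_all add: R_def)
  have R_sq: "R\<^sup>2 = (cmod z + Re z) / 2"
    using abs_Re_le_cmod[of z] by (simp add: R_def)
  have "(2 * c\<^sup>2 - Re z - cmod z) * D = N"
    using cmod_power2[of z] unfolding N_def D_def by (simp add: power2_eq_square algebra_simps)
  then have "c\<^sup>2 - R\<^sup>2 = N / (2 * D)"
    using D_pos unfolding R_sq by (simp add: field_simps)
  also have "\<dots> \<ge> N / (2 * (2 * c\<^sup>2 + \<bar>Im z\<bar>))"
    using N_pos D_pos D_le by (intro divide_left_mono) auto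
  finally have sq_gap: "N / (2 * (2 * c\<^sup>2 + \<bar>Im z\<bar>)) \<le> c\<^sup>2 - R\<^sup>2" .
  have "c - R = (c\<^sup>2 - R\<^sup>2) / (c + R)"
    using c R_nonneg by (simp add: field_simps power2_eq_square)
  also have "\<dots> \<ge> (c\<^sup>2 - R\<^sup>2) / (2 * c)"
    using c R_nonneg R_less by (intro divide_left_mono) (auto simp: power_strict_mono)
  finally have "(c\<^sup>2 - R\<^sup>2) / (2 * c) \<le> c - R" .
  moreover have "N / (4 * c * (2 * c\<^sup>2 + \<bar>Im z\<bar>)) \<le> (c\<^sup>2 - R\<^sup>2) / (2 * c)"
    using divide_right_mono[OF sq_gap, of "2 * c"] c by (simp add: field_simps)
  ultimately show ?thesis
    unfolding N_def R_def by linarith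
qed

(* The roots of x^2 + (c0 + 2 i t) x - ((1 + mu) t^2 + q).  With t = n sigma they are a^+- for
   q = (1 - delta_0j) lambda_j - lambda_0 and b^+- for q = lambda_j. *)
definition char_root :: "real \<Rightarrow> real \<Rightarrow> real \<Rightarrow> real \<Rightarrow> real \<Rightarrow> complex" where
  "char_root c0 t q \<mu> s =
     (- 2 * \<i> * t - c0 + s * csqrt (Complex (4 * \<mu> * t\<^sup>2 + c0\<^sup>2 + 4 * q) (4 * t * c0))) / 2"

lemma Re_char_root:
  "Re (char_root c0 t q \<mu> s) =
     (s * Re (csqrt (Complex (4 * \<mu> * t\<^sup>2 + c0\<^sup>2 + 4 * q) (4 * t * c0))) - c0) / 2"
  by (simp add: char_root_def del: csqrt.simps)

lemma acoef_eq_char_root: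
  "acoef A L c0 s n j \<mu> =
     char_root c0 (of_int n * (2 * pi / L)) ((1 - kdelta j) * lam A j - lam A 0) \<mu> s"
proof -
  have "4 * \<mu> * of_int n ^ 2 * (2 * pi / L) ^ 2 + c0 ^ 2 + 4 * \<i> * of_int n * (2 * pi / L) * c0
      + 4 * ((1 - kdelta j) * lam A j - lam A 0)
    = Complex (4 * \<mu> * (of_int n * (2 * pi / L))\<^sup>2 + c0\<^sup>2 + 4 * ((1 - kdelta j) * lam A j - lam A 0))
        (4 * (of_int n * (2 * pi / L)) * c0)"
    by (simp add: complex_eq_iff power2_eq_square)
  then show ?thesis
    unfolding acoef_def char_root_def Let_def psqrt_eq_csqrt by simp
qed

lemma bcoef_eq_char_root:
  "bcoef A L c0 s n j \<mu> = char_root c0 (of_int n * (2 * pi / L)) (lam A j) \<mu> s"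
proof -
  have "4 * \<mu> * of_int n ^ 2 * (2 * pi / L) ^ 2 + c0 ^ 2 + 4 * \<i> * of_int n * (2 * pi / L) * c0
      + 4 * lam A j
    = Complex (4 * \<mu> * (of_int n * (2 * pi / L))\<^sup>2 + c0\<^sup>2 + 4 * lam A j)
        (4 * (of_int n * (2 * pi / L)) * c0)"
    by (simp add: complex_eq_iff power2_eq_square)
  then show ?thesis
    unfolding bcoef_def char_root_def Let_def psqrt_eq_csqrt by simp
qed

lemma abs_Re_char_root_minus_ge:
  assumes "0 \<le> c0"
  shows "c0 / 2 \<le> \<bar>Re (char_root c0 t q \<mu> (-1))\<bar>"
proof -
  define R where "R = Re (csqrt (Complex (4 * \<mu> * t\<^sup>2 + c0\<^sup>2 + 4 * q) (4 * t * c0)))"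
  have "Re (char_root c0 t q \<mu> (-1)) = - (R + c0) / 2"
    unfolding Re_char_root R_def by simp
  moreover have "0 \<le> R"
    unfolding R_def by (rule Re_csqrt)
  ultimately show ?thesis
    using assms by simp
qed

lemma abs_Re_char_root_ge:
  assumes "0 \<le> c0" "0 \<le> \<mu>" "0 \<le> q0" "q0 \<le> q" "s \<in> {1, -1}"
  shows "(sqrt (c0\<^sup>2 + 4 * q0) - c0) / 2 \<le> \<bar>Re (char_root c0 t q \<mu> s)\<bar>"
proof -
  define P where "P = 4 * \<mu> * t\<^sup>2 + c0\<^sup>2 + 4 * q"
  define R where "R = Re (csqrt (Complex P (4 * t * c0)))"
  have Re_eq: "Re (char_root c0 t q \<mu> s) = (s * R - c0) / 2"
    unfolding Re_char_root P_def R_def ..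
  have "0 \<le> \<mu> * t\<^sup>2"
    using assms by simp
  then have P_ge: "c0\<^sup>2 + 4 * q0 \<le> P"
    unfolding P_def using assms by linarith
  have "sqrt P \<le> R"
    using sqrt_Re_le_Re_csqrt[of "Complex P (4 * t * c0)"] P_ge assms
    unfolding R_def complex.sel by (smt (verit) zero_le_power2)
  then have "sqrt (c0\<^sup>2 + 4 * q0) \<le> R"
    using P_ge by (smt (verit) real_sqrt_le_mono)
  moreover have "c0 \<le> sqrt (c0\<^sup>2 + 4 * q0)"
    by (rule real_le_rsqrt) (use assms in simp)
  moreover have "s = 1 \<or> s = -1"
    using assms(5) by simp
  ultimately have "sqrt (c0\<^sup>2 + 4 * q0) - c0 \<le> \<bar>s * R - c0\<bar>"
    using assms(1) by (elim disjE) simp_all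
  then show ?thesis
    unfolding Re_eq by simp
qed

lemma abs_Re_char_root_ge_sqrt:
  assumes "0 \<le> c0" "0 \<le> 4 * \<mu> * t\<^sup>2 + c0\<^sup>2 + 4 * q" "s \<in> {1, -1}"
  shows "sqrt (4 * \<mu> * t\<^sup>2 + c0\<^sup>2 + 4 * q + 4 * \<bar>t\<bar> * c0) / 4 - c0 / 2
    \<le> \<bar>Re (char_root c0 t q \<mu> s)\<bar>"
proof -
  define P where "P = 4 * \<mu> * t\<^sup>2 + c0\<^sup>2 + 4 * q"
  define R where "R = Re (csqrt (Complex P (4 * t * c0)))"
  have Re_eq: "Re (char_root c0 t q \<mu> s) = (s * R - c0) / 2"
    unfolding Re_char_root P_def R_def ..
  have "sqrt (P + \<bar>4 * t * c0\<bar>) \<le> 2 * R"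
    using sqrt_Re_add_abs_Im_le_Re_csqrt[of "Complex P (4 * t * c0)"] assms(2)
    unfolding R_def P_def complex.sel by blast
  moreover have "\<bar>4 * t * c0\<bar> = 4 * \<bar>t\<bar> * c0"
    using assms(1) by (simp add: abs_mult)
  ultimately have "sqrt (P + 4 * \<bar>t\<bar> * c0) \<le> 2 * R"
    by simp
  moreover have "0 \<le> R"
    unfolding R_def by (rule Re_csqrt)
  moreover have "s = 1 \<or> s = -1"
    using assms(3) by simp
  ultimately have "sqrt (P + 4 * \<bar>t\<bar> * c0) / 2 - c0 \<le> \<bar>s * R - c0\<bar>"
    using assms(1) by (elim disjE) simp_all
  then show ?thesis
    unfolding Re_eq P_def by simp
qed

lemma char_root_plus_Re_neg:
  assumes c0: "0 < c0" and "0 \<le> \<mu>" "0 \<le> c0\<^sup>2 + 4 * q"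
    and neg: "Re (char_root c0 t q \<mu> 1) < 0"
  shows "(1 + \<mu>) * t\<^sup>2 + q < 0"
    and "- ((1 + \<mu>) * t\<^sup>2 + q) / (c0 + 2 * \<bar>t\<bar>) \<le> \<bar>Re (char_root c0 t q \<mu> 1)\<bar>"
proof -
  define z where "z = Complex (4 * \<mu> * t\<^sup>2 + c0\<^sup>2 + 4 * q) (4 * t * c0)"
  define E where "E = - ((1 + \<mu>) * t\<^sup>2 + q)"
  have Re_eq: "Re (char_root c0 t q \<mu> 1) = (Re (csqrt z) - c0) / 2"
    unfolding Re_char_root z_def by (simp del: csqrt.simps)
  have "0 \<le> \<mu> * t\<^sup>2"
    using assms by simp
  then have Re_z: "0 \<le> Re z"
    using assms unfolding z_def complex.sel by linarith
  have less: "Re (csqrt z) < c0"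
    using neg unfolding Re_eq by simp
  have N_eq: "4 * c0\<^sup>2 * (c0\<^sup>2 - Re z) - (Im z)\<^sup>2 = 16 * c0\<^sup>2 * E"
    unfolding z_def E_def complex.sel by (simp add: power2_eq_square algebra_simps)
  have "0 < 16 * c0\<^sup>2 * E"
    using less unfolding Re_csqrt_less_iff[OF c0] N_eq[symmetric] by simp
  then show "(1 + \<mu>) * t\<^sup>2 + q < 0"
    using c0 by (simp add: E_def zero_less_mult_iff)
  have gap: "16 * c0\<^sup>2 * E / (4 * c0 * (2 * c0\<^sup>2 + \<bar>Im z\<bar>)) \<le> c0 - Re (csqrt z)"
    using Re_csqrt_gap[OF c0 Re_z less] unfolding N_eq .
  have "16 * c0\<^sup>2 * E / (4 * c0 * (2 * c0\<^sup>2 + \<bar>Im z\<bar>)) = 2 * (E / (c0 + 2 * \<bar>t\<bar>))"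
  proof -
    define D where "D = c0 + 2 * \<bar>t\<bar>"
    have "4 * c0 * (2 * c0\<^sup>2 + \<bar>Im z\<bar>) = 8 * c0\<^sup>2 * D"
      using c0 unfolding z_def D_def complex.sel by (simp add: abs_mult power2_eq_square algebra_simps)
    moreover have "0 < D"
      using c0 by (simp add: D_def)
    ultimately show ?thesis
      using c0 unfolding D_def[symmetric] by simp
  qed
  moreover have "2 * \<bar>Re (char_root c0 t q \<mu> 1)\<bar> = c0 - Re (csqrt z)"
    using less unfolding Re_eq by (simp del: csqrt.simps)
  ultimately show "E / (c0 + 2 * \<bar>t\<bar>) \<le> \<bar>Re (char_root c0 t q \<mu> 1)\<bar>"
    using gap by linarith
qed

lemma lam_eq: "lam A j = A - 1 + 2 * A * real j"
  by (simp add: lam_def algebra_simps)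

locale wave_parameters =
  fixes A L c0 :: real
  assumes A_pos: "0 < A" and A_less_1: "A < 1" and L_pos: "0 < L"
    and c0_ge: "c0 \<ge> 2 * sqrt (- lam A 0)"
begin

abbreviation \<sigma> :: real where
  "\<sigma> \<equiv> 2 * pi / L"

lemma \<sigma>_pos: "0 < \<sigma>"
  using L_pos by simp

lemma lam_ge: "A - 1 \<le> lam A j"
  using A_pos by (simp add: lam_eq)

lemma c0_pos: "0 < c0"
  using c0_ge A_less_1 by (simp add: lam_def) (smt (verit) real_sqrt_gt_zero)

lemma c0_sq_ge: "4 * (1 - A) \<le> c0\<^sup>2"
proof -
  have "(2 * sqrt (1 - A))\<^sup>2 \<le> c0\<^sup>2"
    using c0_ge A_less_1 by (intro power_mono) (simp_all add: lam_def)
  then show ?thesis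
    using A_less_1 by (simp add: power_mult_distrib)
qed

lemma acoef_shift_ge: "min (1 - A) (2 * A) \<le> (1 - kdelta j) * lam A j - lam A 0"
proof (cases "j = 0")
  case False
  then have "2 * A * 1 \<le> 2 * A * real j"
    using A_pos by (intro mult_left_mono) simp_all
  then show ?thesis
    using False by (simp add: kdelta_def lam_eq)
qed (simp add: kdelta_def lam_eq)

lemma acoef_radicand_ge: "8 * A * real j \<le> c0\<^sup>2 + 4 * ((1 - kdelta j) * lam A j - lam A 0)"
  using A_less_1 by (cases "j = 0") (auto simp: kdelta_def lam_eq)

lemma bcoef_radicand_ge: "8 * A * real j \<le> c0\<^sup>2 + 4 * lam A j"
  using c0_sq_ge by (simp add: lam_eq)

lemma exists_acoef_gap:
  "\<exists>\<alpha>>0. \<forall>s n j \<mu>. 0 \<le> \<mu> \<and> s \<in> {1, -1} \<longrightarrow> \<alpha> \<le> \<bar>Re (acoef A L c0 s n j \<mu>)\<bar>"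
proof (intro exI conjI allI impI)
  let ?q0 = "min (1 - A) (2 * A)"
  have "c0 < sqrt (c0\<^sup>2 + 4 * ?q0)"
    using c0_pos A_pos A_less_1 by (intro real_less_rsqrt) simp
  then show "0 < (sqrt (c0\<^sup>2 + 4 * ?q0) - c0) / 2"
    by simp
  fix s \<mu> :: real and n :: int and j :: nat
  assume "0 \<le> \<mu> \<and> s \<in> {1, -1}"
  then show "(sqrt (c0\<^sup>2 + 4 * ?q0) - c0) / 2 \<le> \<bar>Re (acoef A L c0 s n j \<mu>)\<bar>"
    unfolding acoef_eq_char_root
    using A_pos A_less_1 c0_pos acoef_shift_ge by (intro abs_Re_char_root_ge) auto
qed

lemma abs_Re_bcoef_minus_ge: "c0 / 2 \<le> \<bar>Re (bcoef A L c0 (-1) n j \<mu>)\<bar>"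
  unfolding bcoef_eq_char_root using c0_pos by (intro abs_Re_char_root_minus_ge) simp

lemma finite_unstable_modes: "finite {(n, j). (of_int n * \<sigma>)\<^sup>2 + lam A j < 0}"
proof (rule finite_subset)
  let ?K = "\<lceil>1 / \<sigma>\<rceil>"
  show "{(n, j). (of_int n * \<sigma>)\<^sup>2 + lam A j < 0} \<subseteq> {-?K..?K} \<times> {..nat \<lceil>1 / A\<rceil>}"
  proof clarify
    fix n :: int and j :: nat
    assume unstable: "(of_int n * \<sigma>)\<^sup>2 + lam A j < 0"
    then have "(of_int n * \<sigma>)\<^sup>2 < 1\<^sup>2"
      using lam_ge[of j] A_pos by simp
    then have "\<bar>of_int n\<bar> * \<sigma> < 1"
      using L_pos by (simp add: abs_square_less_1 abs_mult)
    then have "\<bar>of_int n\<bar> < 1 / \<sigma>"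
      using pos_less_divide_eq[OF \<sigma>_pos] by blast
    then have "\<bar>n\<bar> \<le> ?K"
      by linarith
    moreover have "lam A j < 0"
      using unstable by (smt (verit) zero_le_power2)
    then have "real j < 1 / A"
      using A_pos by (simp add: lam_eq field_simps)
    then have "j \<le> nat \<lceil>1 / A\<rceil>"
      by linarith
    ultimately show "n \<in> {-?K..?K} \<and> j \<in> {..nat \<lceil>1 / A\<rceil>}"
      by (simp add: abs_le_iff)
  qed
qed simp

(* Re b^+ < 0 forces (1 + mu) t^2 + lambda_j < 0, so (n, j) is one of the finitely many
   unstable modes, whose depth is at least e; and mu t^2 <= e / 2 once mu < M. *)
lemma exists_bcoef_plus_gap:
  "\<exists>M>0. \<exists>\<gamma>>0. \<forall>n j \<mu>. 0 \<le> \<mu> \<and> \<mu> < M \<and> Re (bcoef A L c0 1 n j \<mu>) < 0 \<longrightarrow>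
     \<gamma> \<le> \<bar>Re (bcoef A L c0 1 n j \<mu>)\<bar>"
proof -
  obtain e where e_pos: "0 < e"
    and e_le: "\<And>n j. (of_int n * \<sigma>)\<^sup>2 + lam A j < 0 \<Longrightarrow> e \<le> - ((of_int n * \<sigma>)\<^sup>2 + lam A j)"
    using finite_pos_lower_bound[OF finite_unstable_modes,
        of "\<lambda>(n, j). - ((of_int n * \<sigma>)\<^sup>2 + lam A j)"] by auto
  define M where "M = min 1 (e / (2 * (1 - A)))"
  have "0 < M"
    using e_pos A_less_1 by (simp add: M_def)
  moreover have "e / (2 * (c0 + 2)) \<le> \<bar>Re (bcoef A L c0 1 n j \<mu>)\<bar>"
    if "0 \<le> \<mu>" "\<mu> < M" "Re (bcoef A L c0 1 n j \<mu>) < 0" for n j \<mu>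
  proof -
    define t where "t = of_int n * \<sigma>"
    define E where "E = - ((1 + \<mu>) * t\<^sup>2 + lam A j)"
    note root = char_root_plus_Re_neg[OF c0_pos \<open>0 \<le> \<mu>\<close>, of "lam A j" t]
    have "0 \<le> c0\<^sup>2 + 4 * lam A j"
      using bcoef_radicand_ge[of j] A_pos by (smt (verit) of_nat_0_le_iff mult_nonneg_nonneg)
    with \<open>Re (bcoef A L c0 1 n j \<mu>) < 0\<close>
    have E_pos: "0 < E" and bound: "E / (c0 + 2 * \<bar>t\<bar>) \<le> \<bar>Re (bcoef A L c0 1 n j \<mu>)\<bar>"
      using root unfolding bcoef_eq_char_root t_def[symmetric] E_def by auto
    have "0 \<le> \<mu> * t\<^sup>2"
      using \<open>0 \<le> \<mu>\<close> by simp
    then have t_sq_less: "t\<^sup>2 < 1 - A" and "e \<le> - (t\<^sup>2 + lam A j)"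
      using E_pos lam_ge[of j] e_le[of n j] unfolding E_def t_def[symmetric]
      by (simp_all add: algebra_simps)
    have "\<mu> * t\<^sup>2 \<le> M * (1 - A)"
      using \<open>0 \<le> \<mu>\<close> \<open>\<mu> < M\<close> t_sq_less by (intro mult_mono) auto
    also have "\<dots> \<le> e / 2"
      using A_less_1 by (simp add: M_def min_def field_simps)
    finally have "e / 2 \<le> E"
      using \<open>e \<le> - (t\<^sup>2 + lam A j)\<close> unfolding E_def by (simp add: algebra_simps)
    moreover have "\<bar>t\<bar> < 1"
      using t_sq_less A_pos abs_square_less_1[of t] by linarith
    ultimately have "e / 2 / (c0 + 2) \<le> E / (c0 + 2 * \<bar>t\<bar>)"
      using c0_pos e_pos by (intro frac_le) simp_all
    with bound show ?thesis
      by simp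
  qed
  moreover have "0 < e / (2 * (c0 + 2))"
    using e_pos c0_pos by simp
  ultimately show ?thesis
    by blast
qed

lemma exists_uniform_gap:
  "\<exists>M>0. \<exists>\<kappa>>0. \<kappa> \<le> c0 / 4 \<and> (\<forall>n j \<mu>. 0 \<le> \<mu> \<and> \<mu> < M \<longrightarrow>
      (\<forall>s\<in>{1, -1}. \<bar>Re (acoef A L c0 s n j \<mu>)\<bar> \<ge> 2 * \<kappa>)
    \<and> \<bar>Re (bcoef A L c0 (-1) n j \<mu>)\<bar> \<ge> 2 * \<kappa>
    \<and> (Re (bcoef A L c0 1 n j \<mu>) < 0 \<longrightarrow> \<bar>Re (bcoef A L c0 1 n j \<mu>)\<bar> \<ge> 2 * \<kappa>))"
proof -
  obtain \<alpha> where "0 < \<alpha>"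
    and acoef_gap: "\<And>s n j \<mu>. 0 \<le> \<mu> \<Longrightarrow> s \<in> {1, -1} \<Longrightarrow> \<alpha> \<le> \<bar>Re (acoef A L c0 s n j \<mu>)\<bar>"
    using exists_acoef_gap by blast
  obtain M \<beta> where "0 < M" "0 < \<beta>"
    and bcoef_gap: "\<And>n j \<mu>. 0 \<le> \<mu> \<Longrightarrow> \<mu> < M \<Longrightarrow> Re (bcoef A L c0 1 n j \<mu>) < 0 \<Longrightarrow>
      \<beta> \<le> \<bar>Re (bcoef A L c0 1 n j \<mu>)\<bar>"
    using exists_bcoef_plus_gap by blast
  define \<kappa> where "\<kappa> = min (\<alpha> / 2) (min (c0 / 4) (\<beta> / 2))"
  have "0 < \<kappa>"
    using \<open>0 < \<alpha>\<close> \<open>0 < \<beta>\<close> c0_pos by (simp add: \<kappa>_def)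
  have "2 * \<kappa> \<le> \<alpha>" "\<kappa> \<le> c0 / 4" "2 * \<kappa> \<le> \<beta>"
    by (simp_all add: \<kappa>_def)
  show ?thesis
  proof (rule exI[of _ M], intro conjI exI[of _ \<kappa>] allI impI)
    fix n j \<mu>
    assume \<mu>: "0 \<le> \<mu> \<and> \<mu> < M"
    show "\<forall>s\<in>{1, -1}. \<bar>Re (acoef A L c0 s n j \<mu>)\<bar> \<ge> 2 * \<kappa>"
      using acoef_gap \<mu> \<open>2 * \<kappa> \<le> \<alpha>\<close> by (blast intro: order.trans)
    show "\<bar>Re (bcoef A L c0 (-1) n j \<mu>)\<bar> \<ge> 2 * \<kappa>"
      using abs_Re_bcoef_minus_ge[of n j \<mu>] \<open>\<kappa> \<le> c0 / 4\<close> by linarith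
    show "\<bar>Re (bcoef A L c0 1 n j \<mu>)\<bar> \<ge> 2 * \<kappa>" if "Re (bcoef A L c0 1 n j \<mu>) < 0"
      using bcoef_gap[of \<mu> n j] \<mu> that \<open>2 * \<kappa> \<le> \<beta>\<close> by linarith
  qed fact+
qed

definition radicand_rate :: real where
  "radicand_rate = min (4 * \<sigma>\<^sup>2) (min (8 * A) (4 * \<sigma> * c0))"

lemma radicand_rate_pos: "0 < radicand_rate"
  using L_pos A_pos c0_pos by (simp add: radicand_rate_def)

lemma radicand_ge_rate:
  assumes "0 \<le> \<mu>" "8 * A * real j \<le> c0\<^sup>2 + 4 * q"
  shows "radicand_rate * (\<mu> * of_int n ^ 2 + real j + of_int \<bar>n\<bar>)
    \<le> 4 * \<mu> * (of_int n * \<sigma>)\<^sup>2 + c0\<^sup>2 + 4 * q + 4 * \<bar>of_int n * \<sigma>\<bar> * c0"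
proof -
  have "radicand_rate * (\<mu> * of_int n ^ 2) \<le> 4 * \<sigma>\<^sup>2 * (\<mu> * of_int n ^ 2)"
    using assms(1) by (intro mult_right_mono) (simp_all add: radicand_rate_def)
  also have "\<dots> = 4 * \<mu> * (of_int n * \<sigma>)\<^sup>2"
    by (simp only: power_mult_distrib mult_ac)
  finally have "radicand_rate * (\<mu> * of_int n ^ 2) \<le> 4 * \<mu> * (of_int n * \<sigma>)\<^sup>2" .
  moreover have "radicand_rate * real j \<le> 8 * A * real j"
    by (intro mult_right_mono) (simp_all add: radicand_rate_def)
  moreover have "radicand_rate * of_int \<bar>n\<bar> \<le> 4 * \<sigma> * c0 * of_int \<bar>n\<bar>"
    by (intro mult_right_mono) (simp_all add: radicand_rate_def)
  moreover have "4 * \<sigma> * c0 * of_int \<bar>n\<bar> = 4 * \<bar>of_int n * \<sigma>\<bar> * c0"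
    using L_pos by (simp add: abs_mult)
  moreover have "radicand_rate * (\<mu> * of_int n ^ 2 + real j + of_int \<bar>n\<bar>)
      = radicand_rate * (\<mu> * of_int n ^ 2) + radicand_rate * real j + radicand_rate * of_int \<bar>n\<bar>"
    by (simp add: distrib_left)
  ultimately show ?thesis
    using assms(2) by linarith
qed

lemma char_root_decay:
  assumes \<kappa>: "0 < \<kappa>" "\<kappa> \<le> c0 / 4" and "0 \<le> \<mu>" and q: "8 * A * real j \<le> c0\<^sup>2 + 4 * q"
    and "s \<in> {1, -1}"
    and large: "16 * c0\<^sup>2 / radicand_rate + 1 \<le> \<mu> * of_int n ^ 2 + real j + of_int \<bar>n\<bar>"
  defines "x \<equiv> \<bar>Re (char_root c0 (of_int n * \<sigma>) q \<mu> s)\<bar>"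
    and "S \<equiv> 1 + \<mu> * of_int n ^ 2 + real j + of_int \<bar>n\<bar>"
  shows "0 < 1 / (x - \<kappa>)" and "1 / (x - \<kappa>) \<le> 16 / sqrt (radicand_rate / 2) / sqrt S"
proof -
  define t where "t = of_int n * \<sigma>"
  define W where "W = sqrt (4 * \<mu> * t\<^sup>2 + c0\<^sup>2 + 4 * q + 4 * \<bar>t\<bar> * c0)"
  let ?k = radicand_rate
  have "0 \<le> \<mu> * t\<^sup>2" "0 \<le> 8 * A * real j"
    using \<open>0 \<le> \<mu>\<close> A_pos by simp_all
  then have radicand: "0 \<le> 4 * \<mu> * t\<^sup>2 + c0\<^sup>2 + 4 * q"
    using q by linarith
  then have x_ge: "W / 4 - c0 / 2 \<le> x"
    using abs_Re_char_root_ge_sqrt[of c0 \<mu> t q s] c0_pos \<open>s \<in> {1, -1}\<close>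
    unfolding x_def t_def[symmetric] W_def by simp
  have "0 \<le> W" and "W\<^sup>2 = 4 * \<mu> * t\<^sup>2 + c0\<^sup>2 + 4 * q + 4 * \<bar>t\<bar> * c0"
    using radicand c0_pos unfolding W_def by simp_all
  then have rate: "?k * (S - 1) \<le> W\<^sup>2"
    using radicand_ge_rate[OF \<open>0 \<le> \<mu>\<close> q, of n] unfolding S_def t_def[symmetric] by (simp add: add.assoc)
  have "0 \<le> 16 * c0\<^sup>2 / ?k" and S_ge: "16 * c0\<^sup>2 / ?k + 1 \<le> S - 1"
    using radicand_rate_pos large unfolding S_def by simp_all
  then have "?k * (16 * c0\<^sup>2 / ?k) \<le> ?k * (S - 1)"
    using radicand_rate_pos by (intro mult_left_mono) simp_all
  then have "(4 * c0)\<^sup>2 \<le> W\<^sup>2"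
    using rate radicand_rate_pos by (simp add: power_mult_distrib)
  then have W_ge: "4 * c0 \<le> W"
    using \<open>0 \<le> W\<close> by (rule power2_le_imp_le)
  have "1 \<le> S - 1"
    using \<open>0 \<le> 16 * c0\<^sup>2 / ?k\<close> S_ge by linarith
  then have "?k * (S / 2) \<le> ?k * (S - 1)"
    using radicand_rate_pos by (intro mult_left_mono) simp_all
  then have "sqrt (?k / 2 * S) \<le> sqrt (W\<^sup>2)"
    using rate by (intro real_sqrt_le_mono) simp
  then have "sqrt (?k / 2) * sqrt S \<le> W"
    using \<open>0 \<le> W\<close> by (simp flip: real_sqrt_mult)
  moreover have "0 < sqrt (?k / 2) * sqrt S"
    using radicand_rate_pos \<open>1 \<le> S - 1\<close> by simp
  ultimately have "16 / W \<le> 16 / sqrt (?k / 2) / sqrt S"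
    by (simp add: frac_le)
  with reciprocal_shifted_le[OF x_ge W_ge \<kappa>]
  show "0 < 1 / (x - \<kappa>)" and "1 / (x - \<kappa>) \<le> 16 / sqrt (?k / 2) / sqrt S"
    by simp_all
qed

lemma exists_decay_bound:
  assumes "0 < \<kappa>" "\<kappa> \<le> c0 / 4"
  shows "\<exists>C N. 0 \<le> C \<and> 0 \<le> N \<and>
    (\<forall>(n::int) (j::nat). (real_of_int \<bar>n\<bar> \<ge> N \<or> real j \<ge> N) \<longrightarrow>
      (\<forall>\<mu>::real. 0 \<le> \<mu> \<longrightarrow>
        (\<forall>s\<in>{1, -1::real}.
           0 < 1 / (\<bar>Re (acoef A L c0 s n j \<mu>)\<bar> - \<kappa>)
         \<and> 1 / (\<bar>Re (acoef A L c0 s n j \<mu>)\<bar> - \<kappa>)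
             \<le> C / sqrt (1 + \<mu> * of_int n ^ 2 + real j + of_int \<bar>n\<bar>)
         \<and> 0 < 1 / (\<bar>Re (bcoef A L c0 s n j \<mu>)\<bar> - \<kappa>)
         \<and> 1 / (\<bar>Re (bcoef A L c0 s n j \<mu>)\<bar> - \<kappa>)
             \<le> C / sqrt (1 + \<mu> * of_int n ^ 2 + real j + of_int \<bar>n\<bar>))))"
proof (intro exI conjI allI impI ballI)
  let ?N = "16 * c0\<^sup>2 / radicand_rate + 1"
  show "0 \<le> 16 / sqrt (radicand_rate / 2)" and "0 \<le> ?N"
    using radicand_rate_pos by simp_all
  fix n :: int and j :: nat and \<mu> s :: real
  assume hyps: "real_of_int \<bar>n\<bar> \<ge> ?N \<or> real j \<ge> ?N" and "0 \<le> \<mu>" and "s \<in> {1, -1}"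
  have "0 \<le> \<mu> * of_int n ^ 2" "0 \<le> real j" "0 \<le> real_of_int \<bar>n\<bar>"
    using \<open>0 \<le> \<mu>\<close> by simp_all
  then have "?N \<le> \<mu> * of_int n ^ 2 + real j + of_int \<bar>n\<bar>"
    using hyps by linarith
  note decay = char_root_decay[OF assms \<open>0 \<le> \<mu>\<close> _ \<open>s \<in> {1, -1}\<close> this]
  show "0 < 1 / (\<bar>Re (acoef A L c0 s n j \<mu>)\<bar> - \<kappa>)"
    and "1 / (\<bar>Re (acoef A L c0 s n j \<mu>)\<bar> - \<kappa>)
      \<le> 16 / sqrt (radicand_rate / 2) / sqrt (1 + \<mu> * of_int n ^ 2 + real j + of_int \<bar>n\<bar>)"
    using decay[OF acoef_radicand_ge] unfolding acoef_eq_char_root by simp_all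
  show "0 < 1 / (\<bar>Re (bcoef A L c0 s n j \<mu>)\<bar> - \<kappa>)"
    and "1 / (\<bar>Re (bcoef A L c0 s n j \<mu>)\<bar> - \<kappa>)
      \<le> 16 / sqrt (radicand_rate / 2) / sqrt (1 + \<mu> * of_int n ^ 2 + real j + of_int \<bar>n\<bar>)"
    using decay[OF bcoef_radicand_ge] unfolding bcoef_eq_char_root by simp_all
qed

end

theorem mainTheorem6:
  fixes A L c0 :: real
  assumes "0 < A" "A < 1" "0 < L" "c0 \<ge> 2 * sqrt (- lam A 0)"
  shows "\<exists>M>0. \<forall>\<mu>max. 0 < \<mu>max \<and> \<mu>max \<le> M \<longrightarrow>
    (\<exists>\<kappa>>0.
      (\<forall>(n::int) (j::nat) (\<mu>::real). 0 \<le> \<mu> \<and> \<mu> < \<mu>max \<longrightarrow>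
          (\<forall>s\<in>{1, -1::real}. \<bar>Re (acoef A L c0 s n j \<mu>)\<bar> \<ge> 2 * \<kappa>)
        \<and> \<bar>Re (bcoef A L c0 (-1) n j \<mu>)\<bar> \<ge> 2 * \<kappa>
        \<and> (Re (bcoef A L c0 1 n j \<mu>) < 0 \<longrightarrow> \<bar>Re (bcoef A L c0 1 n j \<mu>)\<bar> \<ge> 2 * \<kappa>))
      \<and> (\<exists>C N J :: real. C \<ge> 0 \<and> N \<ge> 0 \<and> J \<ge> 0 \<and>
          (\<forall>(n::int) (j::nat). (real_of_int \<bar>n\<bar> \<ge> N \<or> real j \<ge> J) \<longrightarrow>
            (\<forall>\<mu>::real. 0 \<le> \<mu> \<and> \<mu> < \<mu>max \<longrightarrow>
              (\<forall>s\<in>{1, -1::real}.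
                 0 < 1 / (\<bar>Re (acoef A L c0 s n j \<mu>)\<bar> - \<kappa>)
               \<and> 1 / (\<bar>Re (acoef A L c0 s n j \<mu>)\<bar> - \<kappa>)
                   \<le> C / sqrt (1 + \<mu> * of_int n ^ 2 + real j + of_int \<bar>n\<bar>)
               \<and> 0 < 1 / (\<bar>Re (bcoef A L c0 s n j \<mu>)\<bar> - \<kappa>)
               \<and> 1 / (\<bar>Re (bcoef A L c0 s n j \<mu>)\<bar> - \<kappa>)
                   \<le> C / sqrt (1 + \<mu> * of_int n ^ 2 + real j + of_int \<bar>n\<bar>))))))"
proof -
  interpret wave_parameters A L c0
    using assms by unfold_locales
  obtain M \<kappa> where "0 < M" "0 < \<kappa>" "\<kappa> \<le> c0 / 4"
    and gap: "\<forall>n j \<mu>. 0 \<le> \<mu> \<and> \<mu> < M \<longrightarrow>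
        (\<forall>s\<in>{1, -1::real}. \<bar>Re (acoef A L c0 s n j \<mu>)\<bar> \<ge> 2 * \<kappa>)
      \<and> \<bar>Re (bcoef A L c0 (-1) n j \<mu>)\<bar> \<ge> 2 * \<kappa>
      \<and> (Re (bcoef A L c0 1 n j \<mu>) < 0 \<longrightarrow> \<bar>Re (bcoef A L c0 1 n j \<mu>)\<bar> \<ge> 2 * \<kappa>)"
    using exists_uniform_gap by blast
  obtain C N where "0 \<le> C" "0 \<le> N" and decay:
    "\<forall>(n::int) (j::nat). (real_of_int \<bar>n\<bar> \<ge> N \<or> real j \<ge> N) \<longrightarrow>
      (\<forall>\<mu>::real. 0 \<le> \<mu> \<longrightarrow>
        (\<forall>s\<in>{1, -1::real}.
           0 < 1 / (\<bar>Re (acoef A L c0 s n j \<mu>)\<bar> - \<kappa>)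
         \<and> 1 / (\<bar>Re (acoef A L c0 s n j \<mu>)\<bar> - \<kappa>)
             \<le> C / sqrt (1 + \<mu> * of_int n ^ 2 + real j + of_int \<bar>n\<bar>)
         \<and> 0 < 1 / (\<bar>Re (bcoef A L c0 s n j \<mu>)\<bar> - \<kappa>)
         \<and> 1 / (\<bar>Re (bcoef A L c0 s n j \<mu>)\<bar> - \<kappa>)
             \<le> C / sqrt (1 + \<mu> * of_int n ^ 2 + real j + of_int \<bar>n\<bar>)))"
    using exists_decay_bound[OF \<open>0 < \<kappa>\<close> \<open>\<kappa> \<le> c0 / 4\<close>] by blast
  show ?thesis
  proof (rule exI, intro conjI allI impI exI)
    show "0 < M" "0 < \<kappa>" "0 \<le> C" "0 \<le> N" "0 \<le> N"
      by fact+
  qed (use gap decay in force)+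
qed

end
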